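(* For every $\alpha\in[0,1]$ there exist $N_0$ and a family of connected bipartite graphs $(G_N)_{N\ge N_0}$ with $|V(G_N)|=N$ and $\hat r_\infty(G_N)\to\alpha$ as $N\to\infty$. More precisely: (i) if $\alpha\in(0,1]$, the family can be chosen so that $|E(G_N)|=N+O_\alpha(1)$, $\Delta(G_N)=\alpha N+O_\alpha(1)$, and $\hat r_\infty(G_N)=\alpha+O_\alpha(N^{-1/2})$; (ii) if $\alpha=0$, the family can be chosen so that $|E(G_N)|\le 2N$, $\Delta(G_N)\le 2\sqrt N+2$, and $\hat r_\infty(G_N)=O(N^{-1/2})$.
   Context: All graphs are finite and simple; a graph is nonempty if it has at least one edge. $\Delta$ is maximum degree, $tK_2$ is a matching with $t$ edges. For graphs $F,G,H$, $F\to(G,H)$ means every red--blue coloring of $E(F)$ contains a red copy of $G$ or a blue copy of $H$, and $\hat r(G,H)=\min\{|E(F)|:F\to(G,H)\}$. For a nonempty graph $G$, $\hat r_\infty(G)=\lim_{t\to\infty}\frac{\hat r(tK_2,G)}{t\,|E(G)|}$ (this limit exists). $O_\alpha(\cdot)$ denotes a bound with implied constant depending only on $\alpha$. *)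

theory Defs
  imports Complex_Main
begin

text \<open>Finite simple graphs with vertices in nat (every finite graph is isomorphic to one of these).
  A graph is a pair (V, E) with E a set of 2-element subsets of V.\<close>

type_synonym graph = "nat set \<times> nat set set"

definition verts :: "graph \<Rightarrow> nat set" where "verts G = fst G"
definition edges :: "graph \<Rightarrow> nat set set" where "edges G = snd G"

definition wf_graph :: "graph \<Rightarrow> bool" where
  "wf_graph G \<longleftrightarrow> finite (verts G) \<and>
     (\<forall>e\<in>edges G. \<exists>u v. u \<noteq> v \<and> u \<in> verts G \<and> v \<in> verts G \<and> e = {u, v})"

definition has_copy :: "graph \<Rightarrow> graph \<Rightarrow> bool" where
  "has_copy H F \<longleftrightarrow> (\<exists>f. inj_on f (verts H) \<and> f ` verts H \<subseteq> verts F \<and>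
      (\<forall>e\<in>edges H. f ` e \<in> edges F))"

definition arrows :: "graph \<Rightarrow> graph \<Rightarrow> graph \<Rightarrow> bool" where
  "arrows F G H \<longleftrightarrow> (\<forall>R \<subseteq> edges F.
      has_copy G (verts F, R) \<or> has_copy H (verts F, edges F - R))"

definition size_ramsey :: "graph \<Rightarrow> graph \<Rightarrow> nat" where
  "size_ramsey G H = (LEAST m. \<exists>F. wf_graph F \<and> arrows F G H \<and> card (edges F) = m)"

definition matching :: "nat \<Rightarrow> graph" where
  "matching t = ({..<2*t}, {{2*i, 2*i+1} | i. i < t})"

definition r_inf :: "graph \<Rightarrow> real" where
  "r_inf G = lim (\<lambda>t. real (size_ramsey (matching t) G) / (real t * real (card (edges G))))"

definition connected_graph :: "graph \<Rightarrow> bool" where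
  "connected_graph G \<longleftrightarrow> verts G \<noteq> {} \<and>
     (\<forall>u\<in>verts G. \<forall>v\<in>verts G. (\<lambda>x y. {x, y} \<in> edges G)\<^sup>*\<^sup>* u v)"

definition bipartite :: "graph \<Rightarrow> bool" where
  "bipartite G \<longleftrightarrow> (\<exists>A \<subseteq> verts G. \<forall>e\<in>edges G. card (e \<inter> A) = 1)"

definition degree :: "graph \<Rightarrow> nat \<Rightarrow> nat" where
  "degree G v = card {e \<in> edges G. v \<in> e}"

definition max_degree :: "graph \<Rightarrow> nat" where
  "max_degree G = Max (degree G ` verts G)"

end

theory Submission
  imports Defs "HOL-Library.Nat_Bijection" "HOL-Real_Asymp.Real_Asymp"
begin

text \<open>
  The graphs are trees of depth two: a centre with \<open>D\<close> neighbours, the first \<open>m\<close> of which (the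
  hubs) carry \<open>k\<close> further leaves each, where \<open>k = \<lfloor>\<surd>N\<rfloor>\<close>, \<open>m \<le> k + 1\<close> and \<open>D = min (N - 1) \<lceil>\<alpha> N\<rceil>\<close>
  (or \<open>k + 2\<close> for \<open>\<alpha> = 0\<close>).
  By Fekete's lemma \<open>r_inf G\<close> is the infimum over \<open>t\<close> of \<open>size_ramsey (matching t) G / (t |E(G)|)\<close>.

  Lower bound: if \<open>F \<rightarrow> (t K\<^sub>2, G)\<close>, colour red the edges meeting a set \<open>S\<close> of fewer than \<open>t\<close>
  vertices. There is no red \<open>t K\<^sub>2\<close>, so a blue copy of \<open>G\<close> avoids \<open>S\<close> and some vertex outside \<open>S\<close>
  keeps \<open>\<Delta>(G)\<close> edges avoiding \<open>S\<close>; deleting such vertices one by one gives \<open>|E(F)| \<ge> t \<Delta>(G)\<close>.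

  Upper bound: for \<open>t = k\<close> the host consists of \<open>t\<close> stars with \<open>D - m\<close> leaves and \<open>t - 1 + m\<close>
  stars with \<open>k\<close> leaves, every centre of the first kind joined to every centre of the second.
  A red graph without \<open>t K\<^sub>2\<close> is covered by a maximal matching with fewer than \<open>t\<close> edges, which
  touches fewer than \<open>t\<close> stars of each kind; the untouched stars carry a blue copy of the tree.
  Hence \<open>D / (N - 1) \<le> r_inf G \<le> (D + m + 2 k) / (N - 1)\<close>.
\<close>

section \<open>Fekete's lemma\<close>

lemma subadditive_mult_add_le:
  fixes a :: "nat \<Rightarrow> real"
  assumes sub: "\<And>m n. a (m + n) \<le> a m + a n"
  shows "a (q * k + r) \<le> real q * a k + a r"
proof (induction q)
  case (Suc q)
  have "a (Suc q * k + r) = a (k + (q * k + r))" by (simp add: algebra_simps)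
  also have "\<dots> \<le> a k + a (q * k + r)" by (rule sub)
  finally show ?case using Suc by (simp add: algebra_simps)
qed simp

lemma subadditive_quotient_le:
  fixes a :: "nat \<Rightarrow> real"
  assumes sub: "\<And>m n. a (m + n) \<le> a m + a n" and nonneg: "\<And>n. 0 \<le> a n"
    and "1 \<le> k" "1 \<le> n"
  shows "a n / n \<le> a k / k + (\<Sum>r<k. a r) / n"
proof -
  define q r where "q = n div k" and "r = n mod k"
  have n: "n = q * k + r" and "r < k" using \<open>1 \<le> k\<close> by (simp_all add: q_def r_def)
  have "a r \<le> (\<Sum>r<k. a r)" using \<open>r < k\<close> nonneg by (intro member_le_sum) auto
  moreover have "real q * a k = (real q * real k) * (a k / k)" using \<open>1 \<le> k\<close> by simp
  moreover have "(real q * real k) * (a k / k) \<le> real n * (a k / k)"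
    using nonneg[of k] by (intro mult_right_mono) (simp_all add: n)
  moreover have "a n \<le> real q * a k + a r"
    unfolding n by (rule subadditive_mult_add_le[OF sub])
  ultimately have "a n \<le> real n * (a k / k) + (\<Sum>r<k. a r)"
    by linarith
  then show ?thesis using \<open>1 \<le> n\<close> by (simp add: field_simps)
qed

lemma subadditive_tendsto_Inf:
  fixes a :: "nat \<Rightarrow> real"
  assumes sub: "\<And>m n. a (m + n) \<le> a m + a n" and nonneg: "\<And>n. 0 \<le> a n"
  shows "(\<lambda>n. a n / n) \<longlonglongrightarrow> (INF n\<in>{1..}. a n / n)"
proof -
  have bdd: "bdd_below ((\<lambda>n. a n / n) ` {1..})"
    using nonneg by (intro bdd_belowI[where m = 0]) auto
  show ?thesis
  proof (rule order_tendstoI)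
    fix y
    assume "y < (INF n\<in>{1..}. a n / n)"
    then show "\<forall>\<^sub>F n in sequentially. y < a n / n"
      by (intro eventually_sequentiallyI[of 1])
         (use bdd in \<open>auto intro: less_le_trans cINF_lower\<close>)
  next
    fix y
    assume "(INF n\<in>{1..}. a n / n) < y"
    then obtain k where "1 \<le> k" and k: "a k / k < y"
      by (subst (asm) cINF_less_iff[OF _ bdd]) auto
    have "\<forall>\<^sub>F n in sequentially. (\<Sum>r<k. a r) / n < y - a k / k"
      using k lim_const_over_n[of "\<Sum>r<k. a r"] by (simp add: order_tendsto_iff)
    then show "\<forall>\<^sub>F n in sequentially. a n / n < y"
      using eventually_ge_at_top[of 1]
    proof eventually_elim
      case (elim n)
      then show ?case
        using subadditive_quotient_le[OF sub nonneg \<open>1 \<le> k\<close>, of n] by linarith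
    qed
  qed
qed

section \<open>Copies and matchings\<close>

lemma verts_Pair [simp]: "verts (V, E) = V" and edges_Pair [simp]: "edges (V, E) = E"
  by (simp_all add: verts_def edges_def)

lemma wf_graph_edgeD:
  "wf_graph F \<Longrightarrow> e \<in> edges F \<Longrightarrow> \<exists>u v. u \<noteq> v \<and> u \<in> verts F \<and> v \<in> verts F \<and> e = {u, v}"
  unfolding wf_graph_def by simp

lemma wf_graph_card_edge: "wf_graph F \<Longrightarrow> e \<in> edges F \<Longrightarrow> card e = 2"
  by (auto dest: wf_graph_edgeD)

lemma wf_graph_edges_subset: "wf_graph F \<Longrightarrow> e \<in> edges F \<Longrightarrow> e \<subseteq> verts F"
  by (auto dest: wf_graph_edgeD)

lemma wf_graph_finite_edges: "wf_graph F \<Longrightarrow> finite (edges F)"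
proof -
  assume wf: "wf_graph F"
  then have "edges F \<subseteq> Pow (verts F)" by (auto dest: wf_graph_edges_subset)
  moreover have "finite (verts F)" using wf by (simp add: wf_graph_def)
  ultimately show ?thesis by (simp add: finite_subset)
qed

lemma has_copy_image:
  assumes "has_copy H (V, E)" "inj_on \<phi> V" "\<phi> ` V \<subseteq> V'" "\<And>e. e \<in> E \<Longrightarrow> \<phi> ` e \<in> E'"
  shows "has_copy H (V', E')"
proof -
  from assms(1) obtain f where f: "inj_on f (verts H)" "f ` verts H \<subseteq> V" "\<forall>e\<in>edges H. f ` e \<in> E"
    unfolding has_copy_def by auto
  have "inj_on (\<phi> \<circ> f) (verts H)"
    by (rule comp_inj_on[OF f(1) inj_on_subset[OF assms(2) f(2)]])
  moreover have "(\<phi> \<circ> f) ` verts H \<subseteq> V'"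
    unfolding image_comp[symmetric] using f(2) assms(3) by blast
  moreover have "(\<phi> \<circ> f) ` e \<in> E'" if "e \<in> edges H" for e
    unfolding image_comp[symmetric] using assms(4) f(3) that by blast
  ultimately show ?thesis unfolding has_copy_def by (auto intro!: exI[of _ "\<phi> \<circ> f"])
qed

lemma has_copy_mono: "has_copy H (V, E) \<Longrightarrow> V \<subseteq> V' \<Longrightarrow> E \<subseteq> E' \<Longrightarrow> has_copy H (V', E')"
  by (erule has_copy_image[where \<phi> = id]) auto

lemma verts_matching: "verts (matching t) = {..<2 * t}"
  and edges_matching: "edges (matching t) = {{2 * i, 2 * i + 1} | i. i < t}"
  by (simp_all add: matching_def)

lemma card_2_eq_Min_Max:
  fixes e :: "'a::linorder set"
  assumes "card e = 2"
  shows "e = {Min e, Max e}" and "Min e < Max e"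
proof -
  obtain x y where "e = {x, y}" "x \<noteq> y" using assms by (auto simp: card_2_iff)
  then show "e = {Min e, Max e}" "Min e < Max e" by (auto simp: min_def max_def)
qed

lemma has_copy_matchingD:
  assumes "has_copy (matching t) (V, R)"
  obtains M where "finite M" "M \<subseteq> R" "card M = t" "pairwise disjnt M"
    "\<And>e. e \<in> M \<Longrightarrow> card e = 2 \<and> e \<subseteq> V"
proof -
  from assms obtain f where inj: "inj_on f {..<2 * t}" and fV: "f ` {..<2 * t} \<subseteq> V"
    and "\<forall>e\<in>edges (matching t). f ` e \<in> R"
    unfolding has_copy_def verts_matching by auto
  then have fR: "\<And>i. i < t \<Longrightarrow> f ` {2 * i, 2 * i + 1} \<in> R"
    unfolding edges_matching by blast
  define e where "e i = f ` {2 * i, 2 * i + 1}" for i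
  have meet: "i = j" if ij: "i < t" "j < t" and "e i \<inter> e j \<noteq> {}" for i j
  proof -
    obtain x y where x: "x \<in> {2 * i, 2 * i + 1}" and y: "y \<in> {2 * j, 2 * j + 1}" and "f x = f y"
      using \<open>e i \<inter> e j \<noteq> {}\<close> unfolding e_def by blast
    have "x = y" using inj_onD[OF inj \<open>f x = f y\<close>] x y ij by auto
    then show "i = j" using x y by auto
  qed
  show ?thesis
  proof (rule that)
    show "finite (e ` {..<t})" by simp
    show "e ` {..<t} \<subseteq> R" using fR by (auto simp: e_def)
    have "inj_on e {..<t}"
      by (intro inj_onI meet) (auto simp: e_def)
    then show "card (e ` {..<t}) = t" by (simp add: card_image)
    show "pairwise disjnt (e ` {..<t})"
      using meet unfolding pairwise_def disjnt_def by blast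
    fix x assume "x \<in> e ` {..<t}"
    then obtain i where "i < t" "x = e i" by auto
    then show "card x = 2 \<and> x \<subseteq> V"
      using inj_onD[OF inj, of "2 * i" "2 * i + 1"] fV by (auto simp: e_def card_2_iff)
  qed
qed

lemma enumerate_disjoint_pairs:
  fixes b :: "nat \<Rightarrow> 'a::linorder set"
  assumes "inj_on b {..<t}" "pairwise disjnt (b ` {..<t})" "\<And>i. i < t \<Longrightarrow> card (b i) = 2"
  obtains f where "inj_on f {..<2 * t}" "\<And>i. i < t \<Longrightarrow> f ` {2 * i, 2 * i + 1} = b i"
proof
  define f where "f x = (if even x then Min (b (x div 2)) else Max (b (x div 2)))" for x
  show f_pair: "f ` {2 * i, 2 * i + 1} = b i" if "i < t" for i
    using card_2_eq_Min_Max(1)[OF assms(3)[OF that]] by (auto simp: f_def)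
  show "inj_on f {..<2 * t}"
  proof (rule inj_onI)
    fix x y assume x: "x \<in> {..<2 * t}" and y: "y \<in> {..<2 * t}" and "f x = f y"
    have in_pair: "f z \<in> b (z div 2)" if "z < 2 * t" for z
    proof -
      have "z div 2 < t" "z \<in> {2 * (z div 2), 2 * (z div 2) + 1}" using that by auto
      then show ?thesis using f_pair by blast
    qed
    show "x = y"
    proof (cases "x div 2 = y div 2")
      case True
      have "x div 2 < t" using x by simp
      then have "Min (b (x div 2)) \<noteq> Max (b (x div 2))"
        using card_2_eq_Min_Max(2)[OF assms(3)] by (metis less_irrefl)
      then have "even x = even y"
        using \<open>f x = f y\<close> True by (auto simp: f_def split: if_splits)
      then show ?thesis using True by (metis div_mult_mod_eq even_iff_mod_2_eq_zero odd_iff_mod_2_eq_one)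
    next
      case False
      then have "b (x div 2) \<noteq> b (y div 2)"
        using x y assms(1) by (auto dest: inj_onD)
      then have "disjnt (b (x div 2)) (b (y div 2))"
        using assms(2) x y unfolding pairwise_def by simp
      then show ?thesis using in_pair[of x] in_pair[of y] x y \<open>f x = f y\<close> by (auto simp: disjnt_iff)
    qed
  qed
qed

lemma has_copy_matchingI:
  assumes "finite M" "M \<subseteq> R" "card M = t" "pairwise disjnt M"
    "\<And>e. e \<in> M \<Longrightarrow> card e = 2 \<and> e \<subseteq> V"
  shows "has_copy (matching t) (V, R)"
proof -
  obtain b where b: "bij_betw b {..<t} M"
    using assms(1,3) ex_bij_betw_nat_finite lessThan_atLeast0 by metis
  have bM: "b i \<in> M" if "i < t" for i using b that by (auto dest: bij_betwE)
  obtain f where inj: "inj_on f {..<2 * t}" and f_pair: "\<And>i. i < t \<Longrightarrow> f ` {2 * i, 2 * i + 1} = b i"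
    using enumerate_disjoint_pairs[of b t] b assms(4,5) bM by (auto simp: bij_betw_def)
  have "f x \<in> V" if "x < 2 * t" for x
  proof -
    have "x \<in> {2 * (x div 2), 2 * (x div 2) + 1}" "x div 2 < t" using that by auto
    then show ?thesis using f_pair[of "x div 2"] bM assms(5) by blast
  qed
  moreover have "\<forall>e\<in>edges (matching t). f ` e \<in> R"
    using f_pair bM assms(2) by (auto simp: edges_matching)
  ultimately show ?thesis
    using inj unfolding has_copy_def verts_matching by auto
qed

lemma has_copy_matching_add:
  assumes "has_copy (matching s) (V1, R)" "has_copy (matching t) (V2, R)" "V1 \<inter> V2 = {}"
  shows "has_copy (matching (s + t)) (V1 \<union> V2, R)"
proof -
  obtain M1 where M1: "finite M1" "M1 \<subseteq> R" "card M1 = s" "pairwise disjnt M1"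
    "\<And>e. e \<in> M1 \<Longrightarrow> card e = 2 \<and> e \<subseteq> V1"
    using has_copy_matchingD[OF assms(1)] by blast
  obtain M2 where M2: "finite M2" "M2 \<subseteq> R" "card M2 = t" "pairwise disjnt M2"
    "\<And>e. e \<in> M2 \<Longrightarrow> card e = 2 \<and> e \<subseteq> V2"
    using has_copy_matchingD[OF assms(2)] by blast
  have disj: "disjnt e1 e2" if "e1 \<in> M1" "e2 \<in> M2" for e1 e2
    using M1(5)[OF that(1)] M2(5)[OF that(2)] assms(3) by (auto simp: disjnt_def)
  have "M1 \<inter> M2 = {}"
    using disj M1(5) by (fastforce simp: disjnt_def)
  then have "card (M1 \<union> M2) = s + t"
    using M1(1,3) M2(1,3) by (simp add: card_Un_disjoint)
  moreover have "pairwise disjnt (M1 \<union> M2)"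
    using M1(4) M2(4) disj by (auto simp: pairwise_def disjnt_sym)
  moreover have "card e = 2 \<and> e \<subseteq> V1 \<union> V2" if "e \<in> M1 \<union> M2" for e
    using that M1(5) M2(5) by blast
  ultimately show ?thesis
    using M1(1,2) M2(1,2) by (intro has_copy_matchingI[of "M1 \<union> M2"]) auto
qed

lemma not_has_copy_matching_if_covered:
  assumes "finite S" "card S < t" "\<And>e. e \<in> R \<Longrightarrow> e \<inter> S \<noteq> {}"
  shows "\<not> has_copy (matching t) (V, R)"
proof
  assume "has_copy (matching t) (V, R)"
  then obtain M where M: "M \<subseteq> R" "card M = t" "pairwise disjnt M"
    by (auto elim: has_copy_matchingD)
  have "\<forall>e\<in>M. \<exists>x. x \<in> e \<inter> S" using M(1) assms(3) by blast
  then obtain p where p: "\<forall>e\<in>M. p e \<in> e \<inter> S" by metis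
  have "inj_on p M"
  proof (rule inj_onI)
    fix e1 e2 assume e: "e1 \<in> M" "e2 \<in> M" and "p e1 = p e2"
    then have "\<not> disjnt e1 e2" using p by (auto simp: disjnt_def)
    then show "e1 = e2" using M(3) e by (auto simp: pairwise_def)
  qed
  moreover have "p ` M \<subseteq> S" using p by auto
  ultimately have "card M \<le> card S" using assms(1) by (metis card_inj_on_le)
  then show False using M(2) assms(2) by simp
qed

lemma small_matching_cover:
  assumes "finite R" "\<And>e. e \<in> R \<Longrightarrow> card e = 2 \<and> e \<subseteq> V"
    and "\<not> has_copy (matching t) (V, R)"
  obtains M where "M \<subseteq> R" "card M < t" "\<And>e. e \<in> R \<Longrightarrow> e \<inter> \<Union>M \<noteq> {}"
proof -
  define P where "P M \<longleftrightarrow> M \<subseteq> R \<and> pairwise disjnt M" for M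
  have "\<forall>M. P M \<longrightarrow> card M < Suc (card R)"
    using assms(1) by (auto simp: P_def intro!: le_imp_less_Suc card_mono)
  then obtain M where PM: "P M" and max: "\<And>M'. P M' \<Longrightarrow> card M' \<le> card M"
    using ex_has_greatest_nat[of P "{}" card "Suc (card R)"] by (auto simp: P_def)
  have fin: "finite M" using PM assms(1) finite_subset by (auto simp: P_def)
  have "card M < t"
  proof (rule ccontr)
    assume "\<not> card M < t"
    then obtain M' where "M' \<subseteq> M" "card M' = t" "finite M'"
      by (metis obtain_subset_with_card_n not_less)
    then have "has_copy (matching t) (V, R)"
      using PM assms(2) by (intro has_copy_matchingI[of M']) (auto simp: P_def pairwise_subset)
    then show False using assms(3) by simp
  qed
  moreover have "e \<inter> \<Union>M \<noteq> {}" if "e \<in> R" for e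
  proof
    assume "e \<inter> \<Union>M = {}"
    moreover have "e \<noteq> {}" using assms(2)[OF that] by auto
    ultimately have "e \<notin> M" "P (insert e M)"
      using PM that by (auto simp: P_def pairwise_insert disjnt_def)
    then show False using max[of "insert e M"] fin by simp
  qed
  ultimately show ?thesis using PM that by (auto simp: P_def)
qed

section \<open>Size-Ramsey numbers of matchings\<close>

lemma graph_collapse: "(verts F, edges F) = F"
  by (simp add: verts_def edges_def)

lemma wf_graph_image:
  assumes "wf_graph F" "inj_on \<phi> (verts F)"
  shows "wf_graph (\<phi> ` verts F, (`) \<phi> ` edges F)"
  unfolding wf_graph_def
proof (intro conjI ballI)
  show "finite (verts (\<phi> ` verts F, (`) \<phi> ` edges F))"
    using assms(1) by (simp add: wf_graph_def)
  fix e' assume "e' \<in> edges (\<phi> ` verts F, (`) \<phi> ` edges F)"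
  then obtain e where "e \<in> edges F" "e' = \<phi> ` e" by auto
  then obtain u v where "u \<noteq> v" "u \<in> verts F" "v \<in> verts F" "e' = {\<phi> u, \<phi> v}"
    using wf_graph_edgeD[OF assms(1)] by force
  then show "\<exists>u v. u \<noteq> v \<and> u \<in> verts (\<phi> ` verts F, (`) \<phi> ` edges F)
      \<and> v \<in> verts (\<phi> ` verts F, (`) \<phi> ` edges F) \<and> e' = {u, v}"
    using inj_onD[OF assms(2)] by (intro exI[of _ "\<phi> u"] exI[of _ "\<phi> v"]) auto
qed

lemma wf_graph_Un: "wf_graph (V1, E1) \<Longrightarrow> wf_graph (V2, E2) \<Longrightarrow> wf_graph (V1 \<union> V2, E1 \<union> E2)"
  unfolding wf_graph_def by fastforce

lemma arrows_image:
  assumes "arrows F H G" "inj_on \<phi> (verts F)"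
  shows "arrows (\<phi> ` verts F, (`) \<phi> ` edges F) H G"
  unfolding arrows_def
proof (intro allI impI)
  fix R
  define R' where "R' = {e \<in> edges F. \<phi> ` e \<in> R}"
  have "has_copy H (verts F, R') \<or> has_copy G (verts F, edges F - R')"
    using assms(1) by (simp add: arrows_def R'_def)
  then show "has_copy H (verts (\<phi> ` verts F, (`) \<phi> ` edges F), R)
      \<or> has_copy G (verts (\<phi> ` verts F, (`) \<phi> ` edges F), edges (\<phi> ` verts F, (`) \<phi> ` edges F) - R)"
  proof (elim disjE)
    assume "has_copy H (verts F, R')"
    then have "has_copy H (\<phi> ` verts F, R)"
      by (rule has_copy_image[OF _ assms(2)]) (auto simp: R'_def)
    then show ?thesis by simp
  next
    assume "has_copy G (verts F, edges F - R')"
    then have "has_copy G (\<phi> ` verts F, (`) \<phi> ` edges F - R)"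
      by (rule has_copy_image[OF _ assms(2)]) (auto simp: R'_def)
    then show ?thesis by simp
  qed
qed

lemma arrows_matching_add:
  assumes "arrows (V1, E1) (matching s) G" "arrows (V2, E2) (matching t) G" "V1 \<inter> V2 = {}"
  shows "arrows (V1 \<union> V2, E1 \<union> E2) (matching (s + t)) G"
  unfolding arrows_def
proof (intro allI impI)
  fix R assume "R \<subseteq> edges (V1 \<union> V2, E1 \<union> E2)"
  have 1: "has_copy (matching s) (V1, R \<inter> E1) \<or> has_copy G (V1, E1 - R)"
    using assms(1) unfolding arrows_def by (metis Diff_Int2 Int_lower2 edges_Pair inf.idem verts_Pair)
  have 2: "has_copy (matching t) (V2, R \<inter> E2) \<or> has_copy G (V2, E2 - R)"
    using assms(2) unfolding arrows_def by (metis Diff_Int2 Int_lower2 edges_Pair inf.idem verts_Pair)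
  show "has_copy (matching (s + t)) (verts (V1 \<union> V2, E1 \<union> E2), R)
      \<or> has_copy G (verts (V1 \<union> V2, E1 \<union> E2), edges (V1 \<union> V2, E1 \<union> E2) - R)"
  proof (cases "has_copy G (V1, E1 - R) \<or> has_copy G (V2, E2 - R)")
    case True
    then have "has_copy G (V1 \<union> V2, E1 \<union> E2 - R)"
      by (elim disjE) (erule has_copy_mono; blast)+
    then show ?thesis by simp
  next
    case False
    then have "has_copy (matching s) (V1, R)" "has_copy (matching t) (V2, R)"
      using 1 2 by (auto elim: has_copy_mono)
    then show ?thesis using has_copy_matching_add assms(3) by auto
  qed
qed

definition matching_arrowable :: "graph \<Rightarrow> bool" where
  "matching_arrowable G \<longleftrightarrow> (\<forall>t. \<exists>F. wf_graph F \<and> arrows F (matching t) G)"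

lemma size_ramsey_le: "wf_graph F \<Longrightarrow> arrows F H G \<Longrightarrow> size_ramsey H G \<le> card (edges F)"
  unfolding size_ramsey_def by (blast intro: Least_le)

lemma size_ramsey_obtain:
  assumes "wf_graph F" "arrows F H G"
  obtains F' where "wf_graph F'" "arrows F' H G" "card (edges F') = size_ramsey H G"
proof -
  have "\<exists>m F. wf_graph F \<and> arrows F H G \<and> card (edges F) = m" using assms by blast
  from LeastI_ex[OF this] show ?thesis using that unfolding size_ramsey_def by blast
qed

lemma size_ramsey_matching_add_le:
  assumes "matching_arrowable G"
  shows "size_ramsey (matching (s + t)) G \<le> size_ramsey (matching s) G + size_ramsey (matching t) G"
proof -
  obtain F1 where F1: "wf_graph F1" "arrows F1 (matching s) G"
    and card1: "card (edges F1) = size_ramsey (matching s) G"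
    using assms unfolding matching_arrowable_def by (meson size_ramsey_obtain)
  obtain F2 where F2: "wf_graph F2" "arrows F2 (matching t) G"
    and card2: "card (edges F2) = size_ramsey (matching t) G"
    using assms unfolding matching_arrowable_def by (meson size_ramsey_obtain)
  obtain n where n: "\<forall>v\<in>verts F1. v < n"
    using F1(1) finite_nat_set_iff_bounded by (auto simp: wf_graph_def)
  define V2 E2 where "V2 = (+) n ` verts F2" and "E2 = (`) ((+) n) ` edges F2"
  have "wf_graph (verts F1 \<union> V2, edges F1 \<union> E2)"
    using wf_graph_Un[of "verts F1" "edges F1" V2 E2] wf_graph_image[OF F2(1), of "(+) n"]
    by (simp add: F1(1) graph_collapse V2_def E2_def)
  moreover have "arrows (verts F1 \<union> V2, edges F1 \<union> E2) (matching (s + t)) G"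
    using arrows_matching_add[of "verts F1" "edges F1" s G V2 E2 t] arrows_image[OF F2(2), of "(+) n"] n
    by (force simp: F1(2) graph_collapse V2_def E2_def)
  ultimately have "size_ramsey (matching (s + t)) G \<le> card (edges F1 \<union> E2)"
    using size_ramsey_le by fastforce
  also have "\<dots> \<le> card (edges F1) + card (edges F2)"
    using card_Un_le[of "edges F1" E2] card_image_le[OF wf_graph_finite_edges[OF F2(1)]]
    unfolding E2_def by (meson add_left_mono order_trans)
  finally show ?thesis using card1 card2 by simp
qed

lemma r_inf_eq_Inf:
  assumes "matching_arrowable G"
  shows "r_inf G = (INF t\<in>{1..}. size_ramsey (matching t) G / t) / card (edges G)"
proof -
  define a where "a t = real (size_ramsey (matching t) G)" for t
  have "(\<lambda>t. a t / t) \<longlonglongrightarrow> (INF t\<in>{1..}. a t / t)"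
    using size_ramsey_matching_add_le[OF assms]
    by (intro subadditive_tendsto_Inf) (simp_all add: a_def flip: of_nat_add)
  then have "(\<lambda>t. a t / t * inverse (card (edges G)))
      \<longlonglongrightarrow> (INF t\<in>{1..}. a t / t) * inverse (card (edges G))"
    by (rule tendsto_mult_right)
  then show ?thesis
    unfolding r_inf_def a_def by (simp add: limI divide_inverse mult.assoc)
qed

lemma r_inf_le:
  assumes "matching_arrowable G" "1 \<le> t"
  shows "r_inf G \<le> size_ramsey (matching t) G / (t * card (edges G))"
proof -
  have "bdd_below ((\<lambda>t. size_ramsey (matching t) G / t) ` {1..})"
    by (intro bdd_belowI[where m = 0]) auto
  then have "(INF t\<in>{1..}. size_ramsey (matching t) G / t) \<le> size_ramsey (matching t) G / t"
    using assms(2) by (intro cINF_lower) auto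
  then have "(INF t\<in>{1..}. size_ramsey (matching t) G / t) / card (edges G)
      \<le> size_ramsey (matching t) G / t / card (edges G)"
    by (rule divide_right_mono) simp
  then show ?thesis
    using r_inf_eq_Inf[OF assms(1)] by (simp add: divide_divide_eq_left)
qed

lemma r_inf_ge:
  fixes c :: real
  assumes "matching_arrowable G" "\<And>t. 1 \<le> t \<Longrightarrow> c * t \<le> size_ramsey (matching t) G"
  shows "c / card (edges G) \<le> r_inf G"
proof -
  have "c \<le> (INF t\<in>{1..}. size_ramsey (matching t) G / t)"
    using assms(2) by (intro cINF_greatest) (auto simp: field_simps)
  then show ?thesis
    using r_inf_eq_Inf[OF assms(1)] by (simp add: divide_right_mono)
qed

section \<open>The lower bound\<close>

lemma card_ge_mult_if_avoiding_stars:
  fixes E :: "'a set set"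
  assumes "finite E"
    and "\<And>S. finite S \<Longrightarrow> card S < t \<Longrightarrow> \<exists>v. v \<notin> S \<and> d \<le> card {e\<in>E. v \<in> e \<and> e \<inter> S = {}}"
  shows "t * d \<le> card E"
  using assms
proof (induction t arbitrary: E)
  case (Suc t)
  obtain v where v: "d \<le> card {e\<in>E. v \<in> e}" using Suc.prems(2)[of "{}"] by auto
  define E' where "E' = {e\<in>E. v \<notin> e}"
  have "finite E'" using Suc.prems(1) by (simp add: E'_def)
  have "t * d \<le> card E'"
  proof (rule Suc.IH[OF \<open>finite E'\<close>])
    fix S :: "'a set" assume S: "finite S" "card S < t"
    then have "finite (insert v S)" "card (insert v S) < Suc t"
      by (simp_all add: card_insert_if)
    then obtain w where w: "w \<notin> insert v S" "d \<le> card {e\<in>E. w \<in> e \<and> e \<inter> insert v S = {}}"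
      using Suc.prems(2) by blast
    moreover have "{e\<in>E. w \<in> e \<and> e \<inter> insert v S = {}} = {e\<in>E'. w \<in> e \<and> e \<inter> S = {}}"
      by (auto simp: E'_def)
    ultimately show "\<exists>w. w \<notin> S \<and> d \<le> card {e\<in>E'. w \<in> e \<and> e \<inter> S = {}}" by auto
  qed
  moreover have "card E = card E' + card {e\<in>E. v \<in> e}"
  proof -
    have "E = E' \<union> {e\<in>E. v \<in> e}" "E' \<inter> {e\<in>E. v \<in> e} = {}" by (auto simp: E'_def)
    then show ?thesis using Suc.prems(1) by (metis card_Un_disjoint finite_Un)
  qed
  ultimately show ?case using v by simp
qed simp

lemma arrows_matching_card_edges_ge:
  assumes F: "wf_graph F" and G: "wf_graph G" and arr: "arrows F (matching t) G"
  shows "t * degree G c \<le> card (edges F)"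
proof (rule card_ge_mult_if_avoiding_stars[OF wf_graph_finite_edges[OF F]])
  fix S :: "nat set" assume S: "finite S" "card S < t"
  define R where "R = {e\<in>edges F. e \<inter> S \<noteq> {}}"
  have "\<not> has_copy (matching t) (verts F, R)"
    using S by (intro not_has_copy_matching_if_covered) (auto simp: R_def)
  then have "has_copy G (verts F, edges F - R)"
    using arr unfolding arrows_def R_def by (metis (no_types, lifting) edges_Pair mem_Collect_eq subsetI)
  then obtain g where g: "inj_on g (verts G)" "\<forall>e\<in>edges G. g ` e \<in> edges F - R"
    unfolding has_copy_def by auto
  define Ec where "Ec = {e\<in>edges G. c \<in> e}"
  have "Ec \<subseteq> Pow (verts G)" using wf_graph_edges_subset[OF G] by (auto simp: Ec_def)
  then have "inj_on ((`) g) Ec" by (rule inj_on_subset[OF inj_on_image_Pow[OF g(1)]])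
  moreover have "(`) g ` Ec \<subseteq> {e\<in>edges F. g c \<in> e \<and> e \<inter> S = {}}"
    using g(2) by (auto simp: Ec_def R_def)
  ultimately have deg: "degree G c \<le> card {e\<in>edges F. g c \<in> e \<and> e \<inter> S = {}}"
    unfolding degree_def Ec_def[symmetric]
    by (metis (no_types, lifting) card_image card_mono finite_subset wf_graph_finite_edges[OF F]
        mem_Collect_eq subsetI)
  show "\<exists>v. v \<notin> S \<and> degree G c \<le> card {e\<in>edges F. v \<in> e \<and> e \<inter> S = {}}"
  proof (cases "Ec = {}")
    case True
    then have "degree G c = 0" unfolding degree_def Ec_def[symmetric] by simp
    then show ?thesis using ex_new_if_finite[OF infinite_UNIV_nat S(1)] by auto
  next
    case False
    then obtain e where "e \<in> Ec" by blast
    then have "g c \<notin> S" using g(2) by (auto simp: Ec_def R_def)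
    then show ?thesis using deg by blast
  qed
qed

section \<open>A two-level tree\<close>

text \<open>Vertex \<open>0\<close> is joined to \<open>1, \<dots>, D\<close>; the vertices \<open>D + 1, \<dots>, N - 1\<close> are hung, \<open>k\<close> at a
  time, on the hubs \<open>1, 2, \<dots>\<close>.\<close>

definition hub_of :: "nat \<Rightarrow> nat \<Rightarrow> nat \<Rightarrow> nat" where
  "hub_of D k v = Suc ((v - Suc D) div k)"

definition hub_tree :: "nat \<Rightarrow> nat \<Rightarrow> nat \<Rightarrow> graph" where
  "hub_tree N D k = ({..<N}, (\<lambda>i. {0, i}) ` {1..D} \<union> (\<lambda>v. {v, hub_of D k v}) ` {D<..<N})"

lemma hub_of_neq_0 [simp]: "hub_of D k v \<noteq> 0"
  by (simp add: hub_of_def)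

lemma hub_of_mono: "v \<le> w \<Longrightarrow> hub_of D k v \<le> hub_of D k w"
  by (simp add: hub_of_def div_le_mono)

lemma hub_of_eq_imp_eq:
  assumes "D < x" "D < y" "hub_of D k x = hub_of D k y" "(x - Suc D) mod k = (y - Suc D) mod k"
  shows "x = y"
proof -
  have "(x - Suc D) div k = (y - Suc D) div k" using assms(3) by (simp add: hub_of_def)
  then have "x - Suc D = y - Suc D" using assms(4) by (metis div_mult_mod_eq)
  then show ?thesis using assms(1,2) by simp
qed

lemma verts_hub_tree: "verts (hub_tree N D k) = {..<N}"
  and edges_hub_tree: "edges (hub_tree N D k) = (\<lambda>i. {0, i}) ` {1..D} \<union> (\<lambda>v. {v, hub_of D k v}) ` {D<..<N}"
  by (simp_all add: hub_tree_def)

lemma degree_le_card: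
  assumes "finite W" "\<And>e. e \<in> edges G \<Longrightarrow> v \<in> e \<Longrightarrow> \<exists>w\<in>W. e = {v, w}"
  shows "degree G v \<le> card W"
proof -
  have "{e \<in> edges G. v \<in> e} \<subseteq> (\<lambda>w. {v, w}) ` W" using assms(2) by blast
  then show ?thesis
    unfolding degree_def by (meson assms(1) card_image_le card_mono finite_imageI order_trans)
qed

locale hub_tree_params =
  fixes N D k :: nat
  assumes k_pos: "1 \<le> k" and k_less_D: "k < D" and D_less_N: "D < N"
    and last_hub_le: "hub_of D k (N - 1) \<le> D"
begin

abbreviation num_hubs :: nat where "num_hubs \<equiv> hub_of D k (N - 1)"

lemma hub_of_le_num_hubs: "v < N \<Longrightarrow> hub_of D k v \<le> num_hubs"
  by (simp add: hub_of_mono)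

lemma hub_of_le: "v < N \<Longrightarrow> hub_of D k v \<le> D"
  using hub_of_le_num_hubs last_hub_le order_trans by blast

lemma wf_hub_tree: "wf_graph (hub_tree N D k)"
  unfolding wf_graph_def verts_hub_tree edges_hub_tree
proof (intro conjI ballI)
  fix e assume "e \<in> (\<lambda>i. {0, i}) ` {1..D} \<union> (\<lambda>v. {v, hub_of D k v}) ` {D<..<N}"
  then show "\<exists>u v. u \<noteq> v \<and> u \<in> {..<N} \<and> v \<in> {..<N} \<and> e = {u, v}"
  proof (elim UnE imageE)
    fix i assume "e = {0, i}" "i \<in> {1..D}"
    then show ?thesis using D_less_N by (intro exI[of _ 0] exI[of _ i]) auto
  next
    fix v assume "e = {v, hub_of D k v}" "v \<in> {D<..<N}"
    then show ?thesis using hub_of_le[of v] D_less_N by (intro exI[of _ v] exI[of _ "hub_of D k v"]) auto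
  qed
qed simp

lemma card_edges_hub_tree: "card (edges (hub_tree N D k)) = N - 1"
proof -
  have "inj_on (\<lambda>i. {0, i}) {1..D}" by (auto simp: inj_on_def doubleton_eq_iff)
  moreover have "inj_on (\<lambda>v. {v, hub_of D k v}) {D<..<N}"
    using hub_of_le by (fastforce simp: inj_on_def doubleton_eq_iff)
  moreover have "(\<lambda>i. {0, i}) ` {1..D} \<inter> (\<lambda>v. {v, hub_of D k v}) ` {D<..<N} = {}"
    using hub_of_le by (fastforce simp: doubleton_eq_iff)
  ultimately show ?thesis
    using D_less_N by (simp add: edges_hub_tree card_Un_disjoint card_image)
qed

lemma bipartite_hub_tree: "bipartite (hub_tree N D k)"
  unfolding bipartite_def
proof (intro exI[of _ "insert 0 {D<..<N}"] conjI ballI)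
  show "insert 0 {D<..<N} \<subseteq> verts (hub_tree N D k)" using D_less_N by (auto simp: verts_hub_tree)
  fix e assume "e \<in> edges (hub_tree N D k)"
  then consider i where "i \<in> {1..D}" "e = {0, i}" | v where "v \<in> {D<..<N}" "e = {v, hub_of D k v}"
    by (auto simp: edges_hub_tree)
  then show "card (e \<inter> insert 0 {D<..<N}) = 1"
  proof cases
    case 1
    then have "e \<inter> insert 0 {D<..<N} = {0}" by auto
    then show ?thesis by simp
  next
    case 2
    then have "e \<inter> insert 0 {D<..<N} = {v}" using hub_of_le[of v] by auto
    then show ?thesis by simp
  qed
qed

lemma connected_hub_tree: "connected_graph (hub_tree N D k)"
proof -
  let ?adj = "\<lambda>x y. {x, y} \<in> edges (hub_tree N D k)"
  have adj_sym: "?adj x y \<Longrightarrow> ?adj y x" for x y by (simp add: insert_commute)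
  have near_0: "?adj\<^sup>*\<^sup>* 0 i \<and> ?adj\<^sup>*\<^sup>* i 0" if "i \<noteq> 0" "i \<le> D" for i
    using that adj_sym[of 0 i] by (auto simp: edges_hub_tree)
  have to_0: "?adj\<^sup>*\<^sup>* 0 u \<and> ?adj\<^sup>*\<^sup>* u 0" if "u < N" for u
  proof (cases "D < u")
    case True
    then have "?adj u (hub_of D k u)" using that by (auto simp: edges_hub_tree)
    then show ?thesis
      using near_0[OF hub_of_neq_0 hub_of_le[OF that]] adj_sym
      by (meson converse_rtranclp_into_rtranclp rtranclp.rtrancl_into_rtrancl)
  next
    case False
    then show ?thesis using near_0[of u] by (cases "u = 0") auto
  qed
  show ?thesis unfolding connected_graph_def
    using D_less_N to_0 by (auto simp: verts_hub_tree intro: rtranclp_trans)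
qed

lemma degree_hub_tree_0: "degree (hub_tree N D k) 0 = D"
proof -
  have "{e \<in> edges (hub_tree N D k). 0 \<in> e} = (\<lambda>i. {0, i}) ` {1..D}"
    using hub_of_le by (auto simp: edges_hub_tree)
  moreover have "inj_on (\<lambda>i. {0, i}) {1..D}" by (auto simp: inj_on_def doubleton_eq_iff)
  ultimately show ?thesis by (simp add: degree_def card_image)
qed

lemma degree_hub_tree_hub:
  assumes "1 \<le> u" "u \<le> D"
  shows "degree (hub_tree N D k) u \<le> Suc k"
proof -
  define I where "I = {(u - 1) * k..<(u - 1) * k + k}"
  define W where "W = insert 0 ((\<lambda>w. w + Suc D) ` I)"
  have "degree (hub_tree N D k) u \<le> card W"
  proof (rule degree_le_card)
    fix e assume "e \<in> edges (hub_tree N D k)" "u \<in> e"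
    then consider "e = {0, u}" | v where "D < v" "hub_of D k v = u" "e = {v, u}"
      using assms hub_of_le by (auto simp: edges_hub_tree insert_commute)
    then show "\<exists>w\<in>W. e = {u, w}"
    proof cases
      case (2 v)
      define w where "w = v - Suc D"
      have "w div k = u - 1" using 2 by (simp add: hub_of_def w_def)
      moreover have "w div k * k \<le> w" "w < w div k * k + k"
        using k_pos div_times_less_eq_dividend[of w k] dividend_less_div_times[of k w] by simp_all
      ultimately have "w \<in> I" by (simp add: I_def mult.commute)
      moreover have "v = w + Suc D" using 2 by (simp add: w_def)
      ultimately show ?thesis using 2 by (auto simp: W_def insert_commute)
    qed (simp add: W_def insert_commute)
  qed (simp add: W_def I_def)
  also have "card W \<le> Suc (card ((\<lambda>w. w + Suc D) ` I))"
    by (simp add: W_def I_def card_insert_if)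
  also have "card ((\<lambda>w. w + Suc D) ` I) \<le> k"
    using card_image_le[of I "\<lambda>w. w + Suc D"] by (simp add: I_def)
  finally show ?thesis by simp
qed

lemma degree_hub_tree_leaf:
  assumes "D < u"
  shows "degree (hub_tree N D k) u \<le> 1"
proof -
  have "degree (hub_tree N D k) u \<le> card {hub_of D k u}"
  proof (rule degree_le_card)
    fix e assume "e \<in> edges (hub_tree N D k)" "u \<in> e"
    then obtain v where "v < N" "D < v" "e = {v, hub_of D k v}"
      using assms by (auto simp: edges_hub_tree)
    moreover from this have "hub_of D k v \<le> D" by (simp add: hub_of_le)
    ultimately show "\<exists>w\<in>{hub_of D k u}. e = {u, w}" using assms \<open>u \<in> e\<close> by auto
  qed simp
  then show ?thesis by simp
qed

lemma degree_hub_tree_le: "degree (hub_tree N D k) u \<le> D"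
proof -
  consider "u = 0" | "1 \<le> u" "u \<le> D" | "D < u" by linarith
  then show ?thesis
    using degree_hub_tree_0 degree_hub_tree_hub degree_hub_tree_leaf k_less_D
    by cases fastforce+
qed

lemma max_degree_hub_tree: "max_degree (hub_tree N D k) = D"
  unfolding max_degree_def verts_hub_tree
proof (rule Max_eqI)
  show "D \<in> degree (hub_tree N D k) ` {..<N}"
    using degree_hub_tree_0 D_less_N by (intro rev_image_eqI[of 0]) auto
qed (use degree_hub_tree_le in auto)

end

section \<open>The host graph and the upper bound\<close>

text \<open>Vertex \<open>prod_encode (c, p)\<close> is vertex \<open>p\<close> of star \<open>c\<close>, with \<open>p = 0\<close> the centre.
  The even stars \<open>2 j\<close>, \<open>j < t\<close>, have \<open>L\<close> leaves, the odd stars \<open>2 i + 1\<close>, \<open>i < A\<close>, have \<open>k\<close> leaves,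
  and every even centre is joined to every odd centre.\<close>

definition host :: "nat \<Rightarrow> nat \<Rightarrow> nat \<Rightarrow> nat \<Rightarrow> graph" where
  "host t L A k =
    ((\<lambda>(j, p). prod_encode (2 * j, p)) ` ({..<t} \<times> {..L})
       \<union> (\<lambda>(i, q). prod_encode (2 * i + 1, q)) ` ({..<A} \<times> {..k}),
     (\<lambda>(j, p). {prod_encode (2 * j, 0), prod_encode (2 * j, Suc p)}) ` ({..<t} \<times> {..<L})
       \<union> (\<lambda>(j, i). {prod_encode (2 * j, 0), prod_encode (2 * i + 1, 0)}) ` ({..<t} \<times> {..<A})
       \<union> (\<lambda>(i, q). {prod_encode (2 * i + 1, 0), prod_encode (2 * i + 1, Suc q)}) ` ({..<A} \<times> {..<k}))"

definition star_of :: "nat \<Rightarrow> nat" where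
  "star_of x = fst (prod_decode x)"

lemma star_of_prod_encode [simp]: "star_of (prod_encode (c, p)) = c"
  by (simp add: star_of_def)

lemma host_edgeE:
  assumes "e \<in> edges (host t L A k)"
  obtains (unit) j p where "j < t" "p < L" "e = {prod_encode (2 * j, 0), prod_encode (2 * j, Suc p)}"
  | (cross) j i where "j < t" "i < A" "e = {prod_encode (2 * j, 0), prod_encode (2 * i + 1, 0)}"
  | (hub) i q where "i < A" "q < k" "e = {prod_encode (2 * i + 1, 0), prod_encode (2 * i + 1, Suc q)}"
  using assms unfolding host_def by auto

lemma unit_vertex_in_host: "j < t \<Longrightarrow> p \<le> L \<Longrightarrow> prod_encode (2 * j, p) \<in> verts (host t L A k)"
  unfolding host_def verts_Pair by (intro UnI1 rev_image_eqI[of "(j, p)"]) auto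

lemma hub_vertex_in_host: "i < A \<Longrightarrow> q \<le> k \<Longrightarrow> prod_encode (2 * i + 1, q) \<in> verts (host t L A k)"
  unfolding host_def verts_Pair by (intro UnI2 rev_image_eqI[of "(i, q)"]) auto

lemma unit_edge_in_host:
  "j < t \<Longrightarrow> p < L \<Longrightarrow> {prod_encode (2 * j, 0), prod_encode (2 * j, Suc p)} \<in> edges (host t L A k)"
  unfolding host_def edges_Pair by (intro UnI1 rev_image_eqI[of "(j, p)"]) auto

lemma cross_edge_in_host:
  "j < t \<Longrightarrow> i < A \<Longrightarrow> {prod_encode (2 * j, 0), prod_encode (2 * i + 1, 0)} \<in> edges (host t L A k)"
  unfolding host_def edges_Pair by (intro UnI1 UnI2 rev_image_eqI[of "(j, i)"]) auto

lemma hub_edge_in_host: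
  "i < A \<Longrightarrow> q < k \<Longrightarrow> {prod_encode (2 * i + 1, 0), prod_encode (2 * i + 1, Suc q)} \<in> edges (host t L A k)"
  unfolding host_def edges_Pair by (intro UnI2 rev_image_eqI[of "(i, q)"]) auto

lemma wf_host: "wf_graph (host t L A k)"
  unfolding wf_graph_def
proof (intro conjI ballI)
  show "finite (verts (host t L A k))" by (simp add: host_def)
  fix e assume "e \<in> edges (host t L A k)"
  then show "\<exists>u v. u \<noteq> v \<and> u \<in> verts (host t L A k) \<and> v \<in> verts (host t L A k) \<and> e = {u, v}"
  proof (cases rule: host_edgeE)
    case (unit j p)
    have "prod_encode (2 * j, 0) \<in> verts (host t L A k)" "prod_encode (2 * j, Suc p) \<in> verts (host t L A k)"
      using unit by (simp_all add: unit_vertex_in_host)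
    moreover have "prod_encode (2 * j, 0) \<noteq> prod_encode (2 * j, Suc p)" by simp
    ultimately show ?thesis using unit by blast
  next
    case (cross j i)
    have "prod_encode (2 * j, 0) \<in> verts (host t L A k)" "prod_encode (2 * i + 1, 0) \<in> verts (host t L A k)"
      using cross by (simp_all only: unit_vertex_in_host hub_vertex_in_host le0)
    moreover have "prod_encode (2 * j, 0) \<noteq> prod_encode (2 * i + 1, 0)" by simp presburger
    ultimately show ?thesis using cross by blast
  next
    case (hub i q)
    have "prod_encode (2 * i + 1, 0) \<in> verts (host t L A k)" "prod_encode (2 * i + 1, Suc q) \<in> verts (host t L A k)"
      using hub by (simp_all only: hub_vertex_in_host le0 Suc_leI)
    moreover have "prod_encode (2 * i + 1, 0) \<noteq> prod_encode (2 * i + 1, Suc q)" by simp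
    ultimately show ?thesis using hub by blast
  qed
qed

lemma card_edges_host: "card (edges (host t L A k)) \<le> t * L + t * A + A * k"
proof -
  have card_Un3: "card (f ` X \<union> g ` Y \<union> h ` Z) \<le> card X + card Y + card Z"
    if "finite X" "finite Y" "finite Z" for f g h and X Y Z :: "(nat \<times> nat) set"
    using card_Un_le[of "f ` X \<union> g ` Y" "h ` Z"] card_Un_le[of "f ` X" "g ` Y"]
      card_image_le[OF that(1), of f] card_image_le[OF that(2), of g] card_image_le[OF that(3), of h]
    by linarith
  show ?thesis
    unfolding host_def edges_Pair by (rule order_trans[OF card_Un3]) simp_all
qed

lemma host_edge_star:
  assumes "e \<in> edges (host t L A k)" "x \<in> e" "y \<in> e" "even (star_of x) \<longleftrightarrow> even (star_of y)"
  shows "star_of x = star_of y"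
  using assms(1) by (cases rule: host_edgeE) (use assms(2-4) in auto)

lemma card_image_Union_le:
  assumes "finite M" "\<And>e x y. e \<in> M \<Longrightarrow> x \<in> e \<Longrightarrow> y \<in> e \<Longrightarrow> P x \<Longrightarrow> P y \<Longrightarrow> f x = f y"
  shows "card (f ` {x \<in> \<Union>M. P x}) \<le> card M"
proof -
  have "f ` {x \<in> \<Union>M. P x} \<subseteq> (\<lambda>e. f (SOME x. x \<in> e \<and> P x)) ` M"
  proof
    fix z assume "z \<in> f ` {x \<in> \<Union>M. P x}"
    then obtain e x where e: "e \<in> M" "x \<in> e" "P x" and z: "z = f x" by auto
    have "(SOME x. x \<in> e \<and> P x) \<in> e \<and> P (SOME x. x \<in> e \<and> P x)"
      using someI[of "\<lambda>x. x \<in> e \<and> P x" x] e by blast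
    then have "z = f (SOME x. x \<in> e \<and> P x)"
      using assms(2)[OF e(1,2) _ e(3)] z by blast
    then show "z \<in> (\<lambda>e. f (SOME x. x \<in> e \<and> P x)) ` M" by (rule rev_image_eqI[OF e(1)])
  qed
  then have "card (f ` {x \<in> \<Union>M. P x}) \<le> card ((\<lambda>e. f (SOME x. x \<in> e \<and> P x)) ` M)"
    by (rule card_mono[OF finite_imageI[OF assms(1)]])
  also have "\<dots> \<le> card M" by (rule card_image_le[OF assms(1)])
  finally show ?thesis .
qed

lemma host_stars_met:
  assumes "M \<subseteq> edges (host t L A k)" "P = even \<or> P = odd"
  shows "finite ((\<lambda>x. star_of x div 2) ` {x \<in> \<Union>M. P (star_of x)})"
    and "card ((\<lambda>x. star_of x div 2) ` {x \<in> \<Union>M. P (star_of x)}) \<le> card M"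
proof -
  have "finite M" by (rule finite_subset[OF assms(1) wf_graph_finite_edges[OF wf_host]])
  have "finite (\<Union>M)"
  proof (rule finite_Union[OF \<open>finite M\<close>])
    fix e assume "e \<in> M"
    then show "finite e" using assms(1) wf_graph_card_edge[OF wf_host] card.infinite by force
  qed
  then show "finite ((\<lambda>x. star_of x div 2) ` {x \<in> \<Union>M. P (star_of x)})"
    by (rule finite_imageI[OF finite_subset[rotated]]) blast
  show "card ((\<lambda>x. star_of x div 2) ` {x \<in> \<Union>M. P (star_of x)}) \<le> card M"
  proof (rule card_image_Union_le[OF \<open>finite M\<close>])
    fix e x y assume "e \<in> M" "x \<in> e" "y \<in> e" "P (star_of x)" "P (star_of y)"
    then show "star_of x div 2 = star_of y div 2"
      using host_edge_star[of e t L A k x y] assms by auto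
  qed
qed

lemma host_free_stars:
  assumes "M \<subseteq> edges (host t L (t - 1 + m) k)" "card M < t"
  obtains j \<sigma> where "j < t" "inj_on \<sigma> {1..m}" "\<sigma> ` {1..m} \<subseteq> {..<t - 1 + m}"
    "\<And>x. x \<in> \<Union>M \<Longrightarrow> star_of x \<noteq> 2 * j \<and> star_of x \<notin> (\<lambda>i. 2 * \<sigma> i + 1) ` {1..m}"
proof -
  define hit where "hit P = (\<lambda>x. star_of x div 2) ` {x \<in> \<Union>M. P (star_of x)}" for P :: "nat \<Rightarrow> bool"
  have fin_hit: "finite (hit even)" "finite (hit odd)"
    unfolding hit_def by (rule host_stars_met(1)[OF assms(1)]; simp)+
  have "card (hit even) \<le> card M" "card (hit odd) \<le> card M"
    unfolding hit_def by (rule host_stars_met(2)[OF assms(1)]; simp)+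
  then have "card (hit even) < card {..<t}" "m \<le> card ({..<t - 1 + m} - hit odd)"
    using assms(2) diff_card_le_card_Diff[OF fin_hit(2), of "{..<t - 1 + m}"] by auto
  then obtain j where j: "j < t" "j \<notin> hit even"
    using card_mono[OF fin_hit(1), of "{..<t}"] by (meson finite_lessThan not_le subsetI lessThan_iff)
  obtain S where S: "S \<subseteq> {..<t - 1 + m} - hit odd" "card S = m" "finite S"
    using obtain_subset_with_card_n[OF \<open>m \<le> card ({..<t - 1 + m} - hit odd)\<close>] by blast
  obtain \<sigma> where \<sigma>: "bij_betw \<sigma> {1..m} S"
    using ex_bij_betw_nat_finite_1[OF S(3)] S(2) by blast
  show ?thesis
  proof (rule that[OF j(1), of \<sigma>])
    show "inj_on \<sigma> {1..m}" "\<sigma> ` {1..m} \<subseteq> {..<t - 1 + m}"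
      using \<sigma> S(1) by (auto simp: bij_betw_def)
    fix x assume x: "x \<in> \<Union>M"
    show "star_of x \<noteq> 2 * j \<and> star_of x \<notin> (\<lambda>i. 2 * \<sigma> i + 1) ` {1..m}"
    proof (intro conjI notI)
      assume "star_of x = 2 * j"
      then have "j \<in> hit even" using x unfolding hit_def by (intro image_eqI[of _ _ x]) auto
      then show False using j(2) by simp
    next
      assume "star_of x \<in> (\<lambda>i. 2 * \<sigma> i + 1) ` {1..m}"
      then obtain i where i: "i \<in> {1..m}" "star_of x = 2 * \<sigma> i + 1" by auto
      then have "\<sigma> i \<in> hit odd" using x unfolding hit_def by (intro image_eqI[of _ _ x]) auto
      moreover have "\<sigma> i \<in> S" using bij_betwE[OF \<sigma>] i(1) by blast
      ultimately show False using S(1) by blast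
    qed
  qed
qed

context hub_tree_params
begin

text \<open>The embedding of the tree into the host, as pairs (star, position in the star): the centre and its
  neighbours beyond the hubs go to the even star \<open>2 j\<close>, hub \<open>i\<close> and its leaves to the odd star
  \<open>2 \<sigma> i + 1\<close>.\<close>

definition host_position :: "nat \<Rightarrow> (nat \<Rightarrow> nat) \<Rightarrow> nat \<Rightarrow> nat \<times> nat" where
  "host_position j \<sigma> v =
    (if v = 0 then (2 * j, 0)
     else if v \<le> num_hubs then (2 * \<sigma> v + 1, 0)
     else if v \<le> D then (2 * j, v - num_hubs)
     else (2 * \<sigma> (hub_of D k v) + 1, Suc ((v - Suc D) mod k)))"

lemma inj_on_host_position:
  assumes "inj_on \<sigma> {1..num_hubs}"
  shows "inj_on (host_position j \<sigma>) {..<N}"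
proof (rule inj_onI)
  fix x y assume x: "x \<in> {..<N}" and y: "y \<in> {..<N}" and eq: "host_position j \<sigma> x = host_position j \<sigma> y"
  have parity: "even (fst (host_position j \<sigma> v)) \<longleftrightarrow> v = 0 \<or> num_hubs < v \<and> v \<le> D" for v
    by (simp add: host_position_def)
  have centre: "snd (host_position j \<sigma> v) = 0 \<longleftrightarrow> v \<le> num_hubs" for v
    using last_hub_le by (simp add: host_position_def)
  have same_parity: "x = 0 \<or> num_hubs < x \<and> x \<le> D \<longleftrightarrow> y = 0 \<or> num_hubs < y \<and> y \<le> D"
    unfolding parity[symmetric] eq ..
  have same_centre: "x \<le> num_hubs \<longleftrightarrow> y \<le> num_hubs"
    unfolding centre[symmetric] eq ..
  consider "x = 0" | "x \<noteq> 0" "x \<le> num_hubs" | "num_hubs < x" "x \<le> D" | "D < x" by linarith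
  then show "x = y"
  proof cases
    case 1
    then show ?thesis using same_parity same_centre by auto
  next
    case 2
    then have "y \<noteq> 0" "y \<le> num_hubs"
      using same_parity same_centre by auto
    then have "\<sigma> x = \<sigma> y" using 2 eq by (simp add: host_position_def)
    then show ?thesis using inj_onD[OF assms] 2 \<open>y \<noteq> 0\<close> \<open>y \<le> num_hubs\<close> by simp
  next
    case 3
    then have "num_hubs < y" "y \<le> D"
      using same_parity same_centre by auto
    then show ?thesis using 3 eq by (simp add: host_position_def)
  next
    case 4
    then have "D < y"
      using same_parity same_centre last_hub_le by auto
    then have "\<sigma> (hub_of D k x) = \<sigma> (hub_of D k y)" "(x - Suc D) mod k = (y - Suc D) mod k"
      using 4 eq last_hub_le by (simp_all add: host_position_def)
    moreover have "hub_of D k v \<in> {1..num_hubs}" if "v < N" for v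
      using hub_of_le_num_hubs[OF that] unfolding hub_of_def by simp
    ultimately have "hub_of D k x = hub_of D k y"
      using x y inj_onD[OF assms] by simp
    then show ?thesis using hub_of_eq_imp_eq 4 \<open>D < y\<close> \<open>(x - Suc D) mod k = (y - Suc D) mod k\<close> by blast
  qed
qed

lemma hub_of_in_hubs: "D < v \<Longrightarrow> v < N \<Longrightarrow> hub_of D k v \<in> {1..num_hubs}"
  using hub_of_le_num_hubs unfolding hub_of_def by simp

context
  fixes j t L A :: nat and \<sigma> :: "nat \<Rightarrow> nat"
  assumes j: "j < t" and \<sigma>: "\<sigma> ` {1..num_hubs} \<subseteq> {..<A}" and L: "D - num_hubs \<le> L"
begin

lemma host_position_in_host:
  assumes "v < N"
  shows "prod_encode (host_position j \<sigma> v) \<in> verts (host t L A k)"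
proof -
  consider "v = 0" | "v \<in> {1..num_hubs}" | "num_hubs < v" "v \<le> D" | "D < v" by force
  then show ?thesis
  proof cases
    case 1
    then show ?thesis using j by (simp add: host_position_def unit_vertex_in_host)
  next
    case 2
    then have "\<sigma> v < A" using \<sigma> by blast
    then show ?thesis using 2 by (simp add: host_position_def hub_vertex_in_host[simplified])
  next
    case 3
    then show ?thesis using j L by (simp add: host_position_def unit_vertex_in_host)
  next
    case 4
    then have "\<sigma> (hub_of D k v) < A" using \<sigma> hub_of_in_hubs assms by blast
    moreover have "Suc ((v - Suc D) mod k) \<le> k" using k_pos by (simp add: Suc_le_eq)
    ultimately show ?thesis using 4 last_hub_le by (simp add: host_position_def hub_vertex_in_host[simplified])
  qed
qed

lemma star_of_host_position:
  assumes "v < N"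
  shows "star_of (prod_encode (host_position j \<sigma> v)) \<in> insert (2 * j) ((\<lambda>i. 2 * \<sigma> i + 1) ` {1..num_hubs})"
  using hub_of_in_hubs[OF _ assms] last_hub_le by (auto simp: host_position_def)

lemma host_position_edge:
  assumes "e \<in> edges (hub_tree N D k)"
  shows "(\<lambda>v. prod_encode (host_position j \<sigma> v)) ` e \<in> edges (host t L A k)"
proof -
  from assms have "e \<in> (\<lambda>i. {0, i}) ` {1..D} \<union> (\<lambda>v. {v, hub_of D k v}) ` {D<..<N}"
    by (simp add: edges_hub_tree)
  then show ?thesis
  proof (elim UnE imageE)
    fix i assume i: "i \<in> {1..D}" and e: "e = {0, i}"
    show ?thesis
    proof (cases "i \<le> num_hubs")
      case True
      then have "\<sigma> i < A" using \<sigma> i by (meson atLeastAtMost_iff image_subset_iff lessThan_iff)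
      then show ?thesis using True i e j by (simp add: host_position_def cross_edge_in_host[simplified])
    next
      case False
      then have "i - num_hubs = Suc (i - num_hubs - 1)" "i - num_hubs - 1 < L" using L i by auto
      then show ?thesis using False i e j by (simp add: host_position_def unit_edge_in_host)
    qed
  next
    fix v assume v: "v \<in> {D<..<N}" and e: "e = {v, hub_of D k v}"
    then have h: "hub_of D k v \<in> {1..num_hubs}" using hub_of_in_hubs by simp
    then have "\<sigma> (hub_of D k v) < A" using \<sigma> by blast
    then show ?thesis
      using hub_edge_in_host[of "\<sigma> (hub_of D k v)" A "(v - Suc D) mod k" k t L] v e h k_pos last_hub_le
      by (simp add: host_position_def insert_commute)
  qed
qed

lemma has_copy_hub_tree_host:
  assumes "inj_on \<sigma> {1..num_hubs}"
  shows "has_copy (hub_tree N D k) (verts (host t L A k),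
    {e \<in> edges (host t L A k). \<forall>x\<in>e. star_of x \<in> insert (2 * j) ((\<lambda>i. 2 * \<sigma> i + 1) ` {1..num_hubs})})"
proof -
  define g where "g = prod_encode \<circ> host_position j \<sigma>"
  have "inj_on g {..<N}"
    unfolding g_def by (rule comp_inj_on[OF inj_on_host_position[OF assms] inj_on_subset[OF inj_prod_encode subset_UNIV]])
  moreover have "g ` {..<N} \<subseteq> verts (host t L A k)"
    using host_position_in_host by (auto simp: g_def)
  moreover have "g ` e \<in> {e \<in> edges (host t L A k).
      \<forall>x\<in>e. star_of x \<in> insert (2 * j) ((\<lambda>i. 2 * \<sigma> i + 1) ` {1..num_hubs})}"
    if e: "e \<in> edges (hub_tree N D k)" for e
  proof -
    have "g ` e \<in> edges (host t L A k)" unfolding g_def comp_def using e by (rule host_position_edge)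
    moreover have "e \<subseteq> {..<N}" using wf_graph_edges_subset[OF wf_hub_tree e] by (simp add: verts_hub_tree)
    ultimately show ?thesis
      using star_of_host_position unfolding g_def comp_def by blast
  qed
  ultimately show ?thesis
    unfolding has_copy_def verts_hub_tree verts_Pair edges_Pair by blast
qed

end

lemma arrows_host: "arrows (host t (D - num_hubs) (t - 1 + num_hubs) k) (matching t) (hub_tree N D k)"
  unfolding arrows_def
proof (intro allI impI)
  let ?F = "host t (D - num_hubs) (t - 1 + num_hubs) k"
  fix R assume R: "R \<subseteq> edges ?F"
  show "has_copy (matching t) (verts ?F, R) \<or> has_copy (hub_tree N D k) (verts ?F, edges ?F - R)"
  proof (cases "has_copy (matching t) (verts ?F, R)")
    case no_red: False
    have "finite R" using R wf_graph_finite_edges[OF wf_host] by (rule finite_subset)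
    moreover have "card e = 2 \<and> e \<subseteq> verts ?F" if "e \<in> R" for e
      using that R wf_graph_card_edge[OF wf_host] wf_graph_edges_subset[OF wf_host] by blast
    ultimately obtain M where M: "M \<subseteq> R" "card M < t" and cover: "\<And>e. e \<in> R \<Longrightarrow> e \<inter> \<Union>M \<noteq> {}"
      using small_matching_cover[of R "verts ?F" t] no_red by metis
    obtain j \<sigma> where "j < t" "inj_on \<sigma> {1..num_hubs}" "\<sigma> ` {1..num_hubs} \<subseteq> {..<t - 1 + num_hubs}"
      and free: "\<And>x. x \<in> \<Union>M \<Longrightarrow> star_of x \<noteq> 2 * j \<and> star_of x \<notin> (\<lambda>i. 2 * \<sigma> i + 1) ` {1..num_hubs}"
      using host_free_stars[OF subset_trans[OF M(1) R] M(2)] by blast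
    then have "has_copy (hub_tree N D k) (verts ?F,
      {e \<in> edges ?F. \<forall>x\<in>e. star_of x \<in> insert (2 * j) ((\<lambda>i. 2 * \<sigma> i + 1) ` {1..num_hubs})})"
      by (intro has_copy_hub_tree_host) simp_all
    moreover have "{e \<in> edges ?F. \<forall>x\<in>e. star_of x \<in> insert (2 * j) ((\<lambda>i. 2 * \<sigma> i + 1) ` {1..num_hubs})}
        \<subseteq> edges ?F - R"
    proof (intro subsetI DiffI)
      fix e assume e: "e \<in> {e \<in> edges ?F. \<forall>x\<in>e. star_of x \<in> insert (2 * j) ((\<lambda>i. 2 * \<sigma> i + 1) ` {1..num_hubs})}"
      then show "e \<in> edges ?F" by simp
      show "e \<notin> R"
      proof
        assume "e \<in> R"
        then obtain x where "x \<in> e" "x \<in> \<Union>M" using cover by blast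
        then show False using e free[of x] by blast
      qed
    qed
    ultimately show ?thesis
      using has_copy_mono[OF _ subset_refl] by blast
  qed simp
qed

lemma matching_arrowable_hub_tree: "matching_arrowable (hub_tree N D k)"
  unfolding matching_arrowable_def using wf_host arrows_host by blast

lemma r_inf_hub_tree_ge: "real D / real (N - 1) \<le> r_inf (hub_tree N D k)"
proof -
  have "real D * real t \<le> size_ramsey (matching t) (hub_tree N D k)" for t
  proof -
    obtain F where "wf_graph F" "arrows F (matching t) (hub_tree N D k)"
      and "card (edges F) = size_ramsey (matching t) (hub_tree N D k)"
      using size_ramsey_obtain[OF wf_host arrows_host] by blast
    then have "t * degree (hub_tree N D k) 0 \<le> size_ramsey (matching t) (hub_tree N D k)"
      using arrows_matching_card_edges_ge[OF _ wf_hub_tree] by metis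
    then show ?thesis using degree_hub_tree_0 by (metis mult.commute of_nat_le_iff of_nat_mult)
  qed
  then show ?thesis
    using r_inf_ge[OF matching_arrowable_hub_tree] by (simp add: card_edges_hub_tree)
qed

lemma r_inf_hub_tree_le: "r_inf (hub_tree N D k) \<le> (real D + num_hubs + 2 * k) / real (N - 1)"
proof -
  have "size_ramsey (matching k) (hub_tree N D k)
      \<le> k * (D - num_hubs) + k * (k - 1 + num_hubs) + (k - 1 + num_hubs) * k"
    using size_ramsey_le[OF wf_host arrows_host] card_edges_host order_trans by blast
  also have "\<dots> \<le> k * (D + num_hubs + 2 * k)"
    using last_hub_le by (simp add: algebra_simps)
  finally have "real (size_ramsey (matching k) (hub_tree N D k)) / real k \<le> real D + num_hubs + 2 * k"
    using k_pos by (simp add: field_simps flip: of_nat_mult of_nat_add)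
  then have "real (size_ramsey (matching k) (hub_tree N D k)) / (real k * real (N - 1))
      \<le> (real D + num_hubs + 2 * k) / real (N - 1)"
    by (simp add: divide_right_mono flip: divide_divide_eq_left)
  then show ?thesis
    using r_inf_le[OF matching_arrowable_hub_tree k_pos] card_edges_hub_tree by simp
qed

end

section \<open>Choice of the parameters\<close>

lemma floor_sqrt_bounds:
  fixes N :: nat
  defines "k \<equiv> nat \<lfloor>sqrt (real N)\<rfloor>"
  shows "real k \<le> sqrt N" "sqrt N < real k + 1" "N < (k + 1)\<^sup>2"
proof -
  have "real k = of_int \<lfloor>sqrt (real N)\<rfloor>" by (simp add: k_def)
  then show "real k \<le> sqrt N" and less: "sqrt N < real k + 1" by linarith+
  have "sqrt N ^ 2 < (real k + 1) ^ 2" using less by (intro power_strict_mono) auto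
  then have "real N < real ((k + 1)\<^sup>2)" by (simp add: add.commute)
  then show "N < (k + 1)\<^sup>2" by (simp only: of_nat_less_iff)
qed

lemma last_hub_le_sqrt:
  fixes N D :: nat
  defines "k \<equiv> nat \<lfloor>sqrt (real N)\<rfloor>"
  assumes "16 \<le> N" "k + 2 \<le> D"
  shows "1 \<le> k" "hub_of D k (N - 1) \<le> k + 1"
proof -
  have "4 \<le> sqrt N" using assms(2) real_sqrt_le_mono[of 16 N] by simp
  then show "1 \<le> k" using floor_sqrt_bounds(2)[of N] unfolding k_def by linarith
  have "N < k * k + 2 * k + 1"
    using floor_sqrt_bounds(3)[of N] by (simp add: k_def power2_eq_square algebra_simps)
  then have "N - 1 - Suc D < (k + 1) * k" using \<open>1 \<le> k\<close> assms(3) by (simp add: algebra_simps)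
  then have "(N - 1 - Suc D) div k < k + 1"
    using \<open>1 \<le> k\<close> by (subst div_less_iff_less_mult) simp_all
  then show "hub_of D k (N - 1) \<le> k + 1" by (simp add: hub_of_def)
qed

lemma divide_square_minus_one_le:
  fixes s X c :: real
  assumes s: "2 \<le> s" and X: "0 \<le> X" "X \<le> c * s"
  shows "X / (s * s - 1) \<le> 2 * c / s"
proof -
  have ss: "4 \<le> s * s" using mult_mono[OF s s] s by force
  have "X / (s * s - 1) \<le> X / (s * s / 2)" using X(1) ss by (intro divide_left_mono) auto
  also have "\<dots> = 2 * X / (s * s)" by simp
  also have "\<dots> \<le> 2 * (c * s) / (s * s)" using X(2) ss by (intro divide_right_mono) auto
  also have "\<dots> = 2 * c / s" using s by simp
  finally show ?thesis .
qed

lemma r_inf_hub_tree_sqrt: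
  fixes N D :: nat
  defines "k \<equiv> nat \<lfloor>sqrt (real N)\<rfloor>"
  assumes "16 \<le> N" "k + 2 \<le> D" "D < N"
  shows "hub_tree_params N D k"
    and "real D / real (N - 1) \<le> r_inf (hub_tree N D k)"
    and "r_inf (hub_tree N D k) \<le> real D / real (N - 1) + 8 / sqrt N"
proof -
  note last_hub = last_hub_le_sqrt[OF assms(2), folded k_def, OF assms(3)]
  show params: "hub_tree_params N D k"
    using last_hub assms(3,4) by unfold_locales simp_all
  show "real D / real (N - 1) \<le> r_inf (hub_tree N D k)"
    by (rule hub_tree_params.r_inf_hub_tree_ge[OF params])
  define s where "s = sqrt N"
  have s: "4 \<le> s" "s * s = N" using assms(2) real_sqrt_le_mono[of 16 N] by (simp_all add: s_def)
  have "real (hub_of D k (N - 1) + 2 * k) \<le> 3 * s + 1"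
    using last_hub floor_sqrt_bounds(1)[of N] unfolding k_def[symmetric] s_def by simp
  moreover have "real (N - 1) = s * s - 1" using s assms(2) by (simp add: of_nat_diff)
  ultimately have "real (hub_of D k (N - 1) + 2 * k) / real (N - 1) \<le> (3 * s + 1) / (s * s - 1)"
    using s(2) assms(2) by (simp add: divide_right_mono)
  also have "\<dots> \<le> 2 * 4 / s"
    using s(1) by (intro divide_square_minus_one_le) auto
  finally have "(real D + hub_of D k (N - 1) + 2 * k) / real (N - 1) \<le> real D / real (N - 1) + 8 / s"
    by (simp add: add_divide_distrib)
  then show "r_inf (hub_tree N D k) \<le> real D / real (N - 1) + 8 / sqrt N"
    using hub_tree_params.r_inf_hub_tree_le[OF params] by (simp add: s_def)
qed

lemma three_sqrt_le_mult:
  fixes \<alpha> x :: real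
  assumes "0 < \<alpha>" "9 / \<alpha>\<^sup>2 \<le> x"
  shows "3 * sqrt x \<le> \<alpha> * x"
proof -
  have "9 \<le> \<alpha>\<^sup>2 * x" using assms by (simp add: field_simps)
  then have "sqrt 9 \<le> sqrt (\<alpha>\<^sup>2 * x)" by (rule real_sqrt_le_mono)
  then have "3 \<le> \<alpha> * sqrt x" using assms(1) by (simp add: real_sqrt_mult)
  moreover have "0 \<le> x" using assms(2) order_trans[of 0 "9 / \<alpha>\<^sup>2" x] by simp
  ultimately have "3 * sqrt x \<le> \<alpha> * sqrt x * sqrt x" by (intro mult_right_mono) auto
  then show ?thesis using \<open>0 \<le> x\<close> by (simp add: mult.assoc)
qed

lemma min_max_ceiling_close:
  fixes \<alpha> :: real
  assumes "0 \<le> \<alpha>" "\<alpha> \<le> 1" "a \<le> nat \<lceil>\<alpha> * N\<rceil>"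
  shows "\<bar>real (min (N - 1) (max a (nat \<lceil>\<alpha> * N\<rceil>))) - \<alpha> * N\<bar> \<le> 1"
proof -
  define c where "c = nat \<lceil>\<alpha> * N\<rceil>"
  have c: "\<alpha> * N \<le> c" "c < \<alpha> * N + 1"
    using assms(1) by (simp_all add: c_def) linarith
  show ?thesis
  proof (cases "c \<le> N - 1")
    case True
    then show ?thesis using assms(3) c by (simp add: c_def[symmetric])
  next
    case False
    have "\<alpha> * N \<le> N" using assms(1,2) by (simp add: mult_left_le_one_le)
    then have "\<alpha> * N - 1 \<le> real (N - 1)" by (cases "N = 0") (simp_all add: of_nat_diff)
    moreover have "real (N - 1) < c" using False by linarith
    ultimately show ?thesis using False assms(3) c by (simp add: c_def[symmetric])
  qed
qed

lemma degree_parameter_bounds: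
  fixes \<alpha> :: real and N :: nat
  assumes "0 \<le> \<alpha>" "\<alpha> \<le> 1" "16 + nat \<lceil>9 / \<alpha>\<^sup>2\<rceil> \<le> N"
  defines "k \<equiv> nat \<lfloor>sqrt (real N)\<rfloor>"
  defines "D \<equiv> min (N - 1) (max (k + 2) (nat \<lceil>\<alpha> * N\<rceil>))"
  shows "k + 2 \<le> D" "D < N" "\<bar>real D - \<alpha> * N\<bar> \<le> sqrt N + 2"
    and "0 < \<alpha> \<Longrightarrow> \<bar>real D - \<alpha> * N\<bar> \<le> 1" and "\<alpha> = 0 \<Longrightarrow> D = k + 2"
proof -
  define s where "s = sqrt N"
  have s: "4 \<le> s" "s * s = N" "real k \<le> s"
    using assms(3) real_sqrt_le_mono[of 16 N] floor_sqrt_bounds(1)[of N] by (simp_all add: s_def k_def)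
  have "4 * s \<le> s * s" using s(1) by (intro mult_right_mono) auto
  then have "real (k + 2) \<le> real (N - 1)" using s assms(3) by (simp add: of_nat_diff)
  then have kN: "k + 2 \<le> N - 1" by (simp only: of_nat_le_iff)
  then show "k + 2 \<le> D" "D < N" unfolding D_def by auto
  note close = min_max_ceiling_close[OF assms(1,2), of "k + 2" N, folded D_def]
  show "\<bar>real D - \<alpha> * N\<bar> \<le> sqrt N + 2"
  proof (cases "k + 2 \<le> nat \<lceil>\<alpha> * N\<rceil>")
    case False
    then have "D = k + 2" using kN by (simp add: D_def)
    moreover have "0 \<le> \<alpha> * N" using assms(1) by simp
    ultimately show ?thesis using False s(3) by (simp add: s_def) linarith
  next
    case True
    then show ?thesis using close real_sqrt_ge_zero[of "real N"] by linarith
  qed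
  show "0 < \<alpha> \<Longrightarrow> \<bar>real D - \<alpha> * N\<bar> \<le> 1"
  proof (rule close)
    assume "0 < \<alpha>"
    moreover have "9 / \<alpha>\<^sup>2 \<le> N" using assms(3) by linarith
    ultimately have "3 * s \<le> \<alpha> * N" unfolding s_def by (rule three_sqrt_le_mult)
    then show "k + 2 \<le> nat \<lceil>\<alpha> * N\<rceil>" using s by linarith
  qed
  show "\<alpha> = 0 \<Longrightarrow> D = k + 2" using kN by (simp add: D_def)
qed

lemma r_inf_hub_tree_close:
  fixes \<alpha> :: real
  assumes "0 \<le> \<alpha>" "\<alpha> \<le> 1" "16 + nat \<lceil>9 / \<alpha>\<^sup>2\<rceil> \<le> N"
  defines "k \<equiv> nat \<lfloor>sqrt (real N)\<rfloor>"
  defines "D \<equiv> min (N - 1) (max (k + 2) (nat \<lceil>\<alpha> * N\<rceil>))"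
  shows "\<bar>r_inf (hub_tree N D k) - \<alpha>\<bar> \<le> 12 / sqrt N"
proof -
  note D = degree_parameter_bounds[OF assms(1-3), folded k_def, folded D_def]
  have N: "16 \<le> N" using assms(3) by simp
  note r = r_inf_hub_tree_sqrt[OF N, folded k_def, OF D(1,2)]
  define s where "s = sqrt N"
  have s: "4 \<le> s" "s * s = N" using N real_sqrt_le_mono[of 16 N] by (simp_all add: s_def)
  have N1: "real (N - 1) = s * s - 1" "0 < s * s - 1" using s N by (simp_all add: of_nat_diff)
  have "\<bar>real D / real (N - 1) - \<alpha>\<bar> = \<bar>real D - \<alpha> * N + \<alpha>\<bar> / (s * s - 1)"
    using N1 s(2) by (simp add: field_simps)
  also have "\<dots> \<le> (s + 3) / (s * s - 1)"
    using D(3) assms(1,2) N1(2) by (intro divide_right_mono) (simp_all add: s_def)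
  also have "\<dots> \<le> 2 * 2 / s"
    using s(1) by (intro divide_square_minus_one_le) auto
  finally show ?thesis using r(2,3) by (simp add: s_def abs_le_iff)
qed

lemma hub_tree_family:
  fixes \<alpha> :: real
  assumes "0 \<le> \<alpha>" "\<alpha> \<le> 1" "16 + nat \<lceil>9 / \<alpha>\<^sup>2\<rceil> \<le> N"
  defines "k \<equiv> nat \<lfloor>sqrt (real N)\<rfloor>"
  defines "G \<equiv> hub_tree N (min (N - 1) (max (k + 2) (nat \<lceil>\<alpha> * N\<rceil>))) k"
  shows "wf_graph G \<and> connected_graph G \<and> bipartite G \<and> card (verts G) = N"
    and "card (edges G) = N - 1"
    and "\<bar>r_inf G - \<alpha>\<bar> \<le> 12 / sqrt N"
    and "0 < \<alpha> \<Longrightarrow> \<bar>real (max_degree G) - \<alpha> * N\<bar> \<le> 1"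
    and "\<alpha> = 0 \<Longrightarrow> max_degree G \<le> sqrt N + 2"
proof -
  define D where "D = min (N - 1) (max (k + 2) (nat \<lceil>\<alpha> * N\<rceil>))"
  note D = degree_parameter_bounds[OF assms(1-3), folded k_def, folded D_def]
  have "16 \<le> N" using assms(3) by simp
  interpret hub_tree_params N D k
    using r_inf_hub_tree_sqrt(1)[OF \<open>16 \<le> N\<close>, folded k_def, OF D(1,2)] .
  have G: "G = hub_tree N D k" by (simp add: G_def D_def)
  show "wf_graph G \<and> connected_graph G \<and> bipartite G \<and> card (verts G) = N"
    using wf_hub_tree connected_hub_tree bipartite_hub_tree by (simp add: G verts_hub_tree)
  show "card (edges G) = N - 1"
    using card_edges_hub_tree by (simp add: G)
  show "\<bar>r_inf G - \<alpha>\<bar> \<le> 12 / sqrt N"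
    using r_inf_hub_tree_close[OF assms(1-3)] by (simp add: G_def k_def)
  show "0 < \<alpha> \<Longrightarrow> \<bar>real (max_degree G) - \<alpha> * N\<bar> \<le> 1"
    using D(4) max_degree_hub_tree by (simp add: G)
  show "\<alpha> = 0 \<Longrightarrow> max_degree G \<le> sqrt N + 2"
    using D(5) max_degree_hub_tree floor_sqrt_bounds(1)[of N] by (simp add: G k_def)
qed

lemma tendsto_of_abs_le_over_sqrt:
  fixes f :: "nat \<Rightarrow> real"
  assumes "\<And>N. N0 \<le> N \<Longrightarrow> \<bar>f N - a\<bar> \<le> C / sqrt N"
  shows "f \<longlonglongrightarrow> a"
proof (rule real_tendsto_sandwich[where f = "\<lambda>N::nat. a - C / sqrt N" and h = "\<lambda>N::nat. a + C / sqrt N"])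
  show "\<forall>\<^sub>F N in sequentially. a - C / sqrt N \<le> f N" "\<forall>\<^sub>F N in sequentially. f N \<le> a + C / sqrt N"
    by (auto intro!: eventually_sequentiallyI[of N0] dest!: assms simp: abs_le_iff)
qed real_asymp+

theorem theorem3p4:
  fixes \<alpha> :: real
  assumes "0 \<le> \<alpha>" "\<alpha> \<le> 1"
  shows "\<exists>(N0::nat) (G :: nat \<Rightarrow> graph).
     (\<forall>N\<ge>N0. wf_graph (G N) \<and> connected_graph (G N) \<and> bipartite (G N)
                \<and> card (verts (G N)) = N)
   \<and> ((\<lambda>N. r_inf (G N)) \<longlonglongrightarrow> \<alpha>)
   \<and> (0 < \<alpha> \<longrightarrow> (\<exists>C::real. \<forall>N\<ge>N0.
          \<bar>real (card (edges (G N))) - real N\<bar> \<le> C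
        \<and> \<bar>real (max_degree (G N)) - \<alpha> * real N\<bar> \<le> C
        \<and> \<bar>r_inf (G N) - \<alpha>\<bar> \<le> C / sqrt (real N)))
   \<and> (\<alpha> = 0 \<longrightarrow> (\<exists>C::real. \<forall>N\<ge>N0.
          card (edges (G N)) \<le> 2 * N
        \<and> real (max_degree (G N)) \<le> 2 * sqrt (real N) + 2
        \<and> \<bar>r_inf (G N)\<bar> \<le> C / sqrt (real N)))"
proof -
  \<comment> \<open>for \<open>\<alpha> = 0\<close> this is \<open>N0 = 16\<close>, as \<open>9 / 0 = 0\<close>\<close>
  define N0 where "N0 = 16 + nat \<lceil>9 / \<alpha>\<^sup>2\<rceil>"
  define G where "G N = hub_tree N (min (N - 1) (max (nat \<lfloor>sqrt (real N)\<rfloor> + 2) (nat \<lceil>\<alpha> * N\<rceil>)))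
    (nat \<lfloor>sqrt (real N)\<rfloor>)" for N
  note family = hub_tree_family[OF assms, folded N0_def G_def]
  have "N0 \<le> N \<Longrightarrow> 1 \<le> N" for N by (simp add: N0_def)
  then have "\<forall>N\<ge>N0. \<bar>real (card (edges (G N))) - real N\<bar> \<le> 12 \<and> card (edges (G N)) \<le> 2 * N"
    using family(2) by (auto simp: of_nat_diff)
  moreover have "(\<lambda>N. r_inf (G N)) \<longlonglongrightarrow> \<alpha>"
    using family(3) by (rule tendsto_of_abs_le_over_sqrt)
  moreover have "\<bar>real (max_degree (G N)) - \<alpha> * real N\<bar> \<le> 12" if "N0 \<le> N" "0 < \<alpha>" for N
    using family(4)[OF that] by linarith
  moreover have "real (max_degree (G N)) \<le> 2 * sqrt (real N) + 2" if "N0 \<le> N" "\<alpha> = 0" for N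
    using family(5)[OF that] real_sqrt_ge_zero[of N] by linarith
  ultimately show ?thesis
    using family(1,3) by (intro exI[of _ N0] exI[of _ G]) (auto intro!: exI[of _ 12])
qed

end
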